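(* Let $n\geqslant2$, $\lambda>0$, distinct points $p_1,\ldots,p_M\in\mathbb{Z}^n$ and positive integers $n_1,\ldots,n_M$ be given, let $g=4\pi\sum_{j=1}^Mn_j\delta_{p_j}$ and $C=4\pi\sum_{j=1}^Mn_j$. Let $\Omega_0\subset\mathbb{Z}^n$ be a finite set containing $\{p_j\}_{j=1}^M$ and let $\Omega$ be a finite connected subset with $\Omega_0\subset\Omega$. Fix $K>2\lambda$, let $u_0=0$ and for $k\geqslant1$ let $u_k:\overline\Omega\to\mathbb{R}$ be the (unique) solution of $$(\Delta-K)u_k=\lambda e^{u_{k-1}}(e^{u_{k-1}}-1)+g-Ku_{k-1}\ \text{ on }\Omega,\qquad u_k=0\ \text{ on }\delta\Omega.$$ Define, for $u:\overline\Omega\to\mathbb{R}$, $$F(u)=\frac12D_\Omega(u)+\sum_{x\in\Omega}\Big[\frac\lambda2(e^{u(x)}-1)^2+g(x)u(x)\Big].$$ Then $c_0\geqslant F(u_1)\geqslant F(u_2)\geqslant\cdots\geqslant F(u_k)\geqslant\cdots$, where the constant $c_0$ depends only on $n$, $C$ and $\lambda$.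
   Context: $\mathbb{Z}^n$ is the integer lattice graph with $x\sim y$ iff $\sum_i|x_i-y_i|=1$. For a finite $\Omega\subset\mathbb{Z}^n$, $\delta\Omega=\{y\in\mathbb{Z}^n\setminus\Omega:\exists x\in\Omega,\ y\sim x\}$ and $\overline\Omega=\Omega\cup\delta\Omega$. For $u:\overline\Omega\to\mathbb{R}$ and $x\in\Omega$, $\Delta u(x)=\sum_{y\sim x}(u(y)-u(x))$. $\delta_p$ is the function equal to $1$ at $p$ and $0$ elsewhere. With $\nabla_{xy}f=f(y)-f(x)$, the Dirichlet energy on $\Omega$ is $D_\Omega(f)=\frac12\sum_{x,y\in\Omega,\,x\sim y}(\nabla_{xy}f)^2+\sum_{x\in\Omega,\,y\in\delta\Omega,\,x\sim y}(\nabla_{xy}f)^2$. *)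

theory Defs
  imports Complex_Main
begin

text \<open>Points of the lattice Z^n are integer lists of length n.\<close>

definition lat_adj :: "int list \<Rightarrow> int list \<Rightarrow> bool" where
  "lat_adj x y \<longleftrightarrow> length x = length y \<and> (\<Sum>i<length x. \<bar>x ! i - y ! i\<bar>) = 1"

definition lat_bdry :: "int list set \<Rightarrow> int list set" where
  "lat_bdry \<Omega> = {y. y \<notin> \<Omega> \<and> (\<exists>x\<in>\<Omega>. lat_adj y x)}"

definition lat_closure :: "int list set \<Rightarrow> int list set" where
  "lat_closure \<Omega> = \<Omega> \<union> lat_bdry \<Omega>"

definition lat_laplacian :: "(int list \<Rightarrow> real) \<Rightarrow> int list \<Rightarrow> real" where
  "lat_laplacian u x = (\<Sum>y\<in>{y. lat_adj x y}. u y - u x)"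

definition lat_connected :: "int list set \<Rightarrow> bool" where
  "lat_connected \<Omega> \<longleftrightarrow>
     (\<forall>x\<in>\<Omega>. \<forall>y\<in>\<Omega>. (\<lambda>a b. a \<in> \<Omega> \<and> b \<in> \<Omega> \<and> lat_adj a b)\<^sup>*\<^sup>* x y)"

definition dirichlet_energy :: "int list set \<Rightarrow> (int list \<Rightarrow> real) \<Rightarrow> real" where
  "dirichlet_energy \<Omega> f =
     (1/2) * (\<Sum>(x,y)\<in>{(x,y). x \<in> \<Omega> \<and> y \<in> \<Omega> \<and> lat_adj x y}. (f y - f x)^2)
     + (\<Sum>(x,y)\<in>{(x,y). x \<in> \<Omega> \<and> y \<in> lat_bdry \<Omega> \<and> lat_adj x y}. (f y - f x)^2)"

definition vortex_src :: "nat \<Rightarrow> (nat \<Rightarrow> int list) \<Rightarrow> (nat \<Rightarrow> nat) \<Rightarrow> int list \<Rightarrow> real" where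
  "vortex_src M p nn x = 4 * pi * (\<Sum>j<M. real (nn j) * (if x = p j then 1 else 0))"

definition energy_F ::
  "real \<Rightarrow> (int list \<Rightarrow> real) \<Rightarrow> int list set \<Rightarrow> (int list \<Rightarrow> real) \<Rightarrow> real" where
  "energy_F lam g \<Omega> u = (1/2) * dirichlet_energy \<Omega> u
     + (\<Sum>x\<in>\<Omega>. lam/2 * (exp (u x) - 1)^2 + g x * u x)"

end

theory Submission
  imports Defs
begin

text \<open>
  Write \<open>q t = (e\<^sup>t - 1)\<^sup>2 / 2\<close>, so that the iteration reads
  \<open>(\<Delta> - K) u\<^sub>k = \<lambda> q'(u\<^sub>k\<^sub>-\<^sub>1) + g - K u\<^sub>k\<^sub>-\<^sub>1\<close>. Since \<open>K \<ge> \<lambda>\<close>, the right-hand side is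
  nonnegative wherever \<open>u\<^sub>k\<^sub>-\<^sub>1 \<le> 0\<close>, so by the maximum principle all iterates are
  nonpositive. For \<open>w = u\<^sub>k - u\<^sub>k\<^sub>-\<^sub>1\<close>, Green's formula and the equation give
  \<open>F(u\<^sub>k) - F(u\<^sub>k\<^sub>-\<^sub>1) = - D(w)/2 + \<Sum> [\<lambda> (q(u\<^sub>k) - q(u\<^sub>k\<^sub>-\<^sub>1) - q'(u\<^sub>k\<^sub>-\<^sub>1) w) - K w\<^sup>2]\<close>,
  and \<open>q'' \<le> 1\<close> on \<open>(-\<infinity>, 0]\<close> bounds each bracket by \<open>(\<lambda>/2 - K) w\<^sup>2 \<le> 0\<close>.
  The descent starts at \<open>F(u\<^sub>0) = F(0) = 0\<close>, so \<open>c\<^sub>0 = 0\<close> works.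
\<close>

lemma lat_adj_commute: "lat_adj x y = lat_adj y x"
  unfolding lat_adj_def by (auto simp: abs_minus_commute)

lemma finite_lat_neighbours: "finite {y. lat_adj x y}"
proof -
  define B where "B = (\<Sum>i<length x. \<bar>x ! i\<bar>) + 1"
  have "{y. lat_adj x y} \<subseteq> {ys. set ys \<subseteq> {-B..B} \<and> length ys = length x}"
  proof
    fix y assume "y \<in> {y. lat_adj x y}"
    then have len: "length y = length x" and dist: "(\<Sum>i<length x. \<bar>x ! i - y ! i\<bar>) = 1"
      by (auto simp: lat_adj_def)
    have "\<bar>y ! i\<bar> \<le> B" if "i < length x" for i
    proof -
      have "\<bar>x ! i - y ! i\<bar> \<le> 1"
        using member_le_sum[of i "{..<length x}" "\<lambda>i. \<bar>x ! i - y ! i\<bar>"] that dist by simp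
      moreover have "\<bar>x ! i\<bar> \<le> (\<Sum>i<length x. \<bar>x ! i\<bar>)"
        using member_le_sum[of i "{..<length x}" "\<lambda>i. \<bar>x ! i\<bar>"] that by simp
      ultimately show ?thesis unfolding B_def by arith
    qed
    with len show "y \<in> {ys. set ys \<subseteq> {-B..B} \<and> length ys = length x}"
      by (force simp: in_set_conv_nth abs_le_iff)
  qed
  then show ?thesis
    by (rule finite_subset) (rule finite_lists_length_eq, simp)
qed

lemma lat_max_principle:
  assumes "finite \<Omega>" and bdry: "\<forall>y\<in>lat_bdry \<Omega>. a y = 0" and "K > 0"
    and super: "\<forall>x\<in>\<Omega>. K * a x \<le> lat_laplacian a x"
  shows "\<forall>x\<in>\<Omega>. a x \<le> 0"
proof (rule ccontr)
  assume "\<not> ?thesis"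
  then obtain x0 where "x0 \<in> \<Omega>" "a x0 > 0" by auto
  with \<open>finite \<Omega>\<close> have "Max (a ` \<Omega>) \<in> a ` \<Omega>" by (intro Max_in) auto
  then obtain x where x: "x \<in> \<Omega>" and "Max (a ` \<Omega>) = a x" by blast
  with \<open>finite \<Omega>\<close> have max: "\<forall>y\<in>\<Omega>. a y \<le> a x" by (metis Max_ge finite_imageI imageI)
  with \<open>a x0 > 0\<close> \<open>x0 \<in> \<Omega>\<close> have pos: "a x > 0" by force
  have "lat_laplacian a x \<le> 0"
    unfolding lat_laplacian_def
  proof (rule sum_nonpos)
    fix y assume "y \<in> {y. lat_adj x y}"
    then have "y \<in> \<Omega> \<or> y \<in> lat_bdry \<Omega>"
      using x lat_adj_commute by (auto simp: lat_bdry_def)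
    then show "a y - a x \<le> 0"
      using max bdry pos by auto
  qed
  moreover have "K * a x > 0" using \<open>K > 0\<close> pos by simp
  ultimately show False using super x by fastforce
qed

definition lat_int_edges :: "int list set \<Rightarrow> (int list \<times> int list) set" where
  "lat_int_edges \<Omega> = {(x, y). x \<in> \<Omega> \<and> y \<in> \<Omega> \<and> lat_adj x y}"

definition lat_bdry_edges :: "int list set \<Rightarrow> (int list \<times> int list) set" where
  "lat_bdry_edges \<Omega> = {(x, y). x \<in> \<Omega> \<and> y \<in> lat_bdry \<Omega> \<and> lat_adj x y}"

definition dirichlet_form ::
  "int list set \<Rightarrow> (int list \<Rightarrow> real) \<Rightarrow> (int list \<Rightarrow> real) \<Rightarrow> real" where
  "dirichlet_form \<Omega> a w =
     (1/2) * (\<Sum>(x, y)\<in>lat_int_edges \<Omega>. (a y - a x) * (w y - w x))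
     + (\<Sum>(x, y)\<in>lat_bdry_edges \<Omega>. (a y - a x) * (w y - w x))"

lemma dirichlet_energy_eq_form: "dirichlet_energy \<Omega> f = dirichlet_form \<Omega> f f"
  unfolding dirichlet_energy_def dirichlet_form_def lat_int_edges_def lat_bdry_edges_def
  by (simp add: power2_eq_square)

lemma dirichlet_form_self_nonneg: "dirichlet_form \<Omega> w w \<ge> 0"
  unfolding dirichlet_form_def by (intro add_nonneg_nonneg mult_nonneg_nonneg sum_nonneg) auto

lemma dirichlet_form_self_diff:
  "dirichlet_form \<Omega> a a - dirichlet_form \<Omega> b b
     = 2 * dirichlet_form \<Omega> a (\<lambda>x. a x - b x) - dirichlet_form \<Omega> (\<lambda>x. a x - b x) (\<lambda>x. a x - b x)"
proof -
  have "(\<Sum>(x, y)\<in>E. (a y - a x) * (a y - a x)) - (\<Sum>(x, y)\<in>E. (b y - b x) * (b y - b x))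
     = 2 * (\<Sum>(x, y)\<in>E. (a y - a x) * ((a y - b y) - (a x - b x)))
       - (\<Sum>(x, y)\<in>E. ((a y - b y) - (a x - b x)) * ((a y - b y) - (a x - b x)))" for E
    by (simp add: sum_subtractf[symmetric] sum_distrib_left case_prod_unfold algebra_simps)
  from this[of "lat_int_edges \<Omega>"] this[of "lat_bdry_edges \<Omega>"] show ?thesis
    unfolding dirichlet_form_def by (simp add: algebra_simps)
qed

lemma sum_mult_lat_laplacian_eq_edges:
  assumes "finite \<Omega>"
  shows "(\<Sum>x\<in>\<Omega>. w x * lat_laplacian a x)
    = (\<Sum>(x, y)\<in>lat_int_edges \<Omega>. w x * (a y - a x)) + (\<Sum>(x, y)\<in>lat_bdry_edges \<Omega>. w x * (a y - a x))"
proof -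
  have edges: "Sigma \<Omega> (\<lambda>x. {y. lat_adj x y}) = lat_int_edges \<Omega> \<union> lat_bdry_edges \<Omega>"
    using lat_adj_commute by (auto simp: lat_int_edges_def lat_bdry_edges_def lat_bdry_def)
  have "finite (Sigma \<Omega> (\<lambda>x. {y. lat_adj x y}))"
    using assms finite_lat_neighbours by blast
  then have "finite (lat_int_edges \<Omega>)" "finite (lat_bdry_edges \<Omega>)"
    unfolding edges by simp_all
  have "(\<Sum>x\<in>\<Omega>. w x * lat_laplacian a x) = (\<Sum>(x, y)\<in>Sigma \<Omega> (\<lambda>x. {y. lat_adj x y}). w x * (a y - a x))"
    unfolding lat_laplacian_def sum_distrib_left
    by (simp add: sum.Sigma assms finite_lat_neighbours)
  also have "\<dots> = (\<Sum>(x, y)\<in>lat_int_edges \<Omega>. w x * (a y - a x)) + (\<Sum>(x, y)\<in>lat_bdry_edges \<Omega>. w x * (a y - a x))"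
    unfolding edges using \<open>finite (lat_int_edges \<Omega>)\<close> \<open>finite (lat_bdry_edges \<Omega>)\<close>
    by (rule sum.union_disjoint) (auto simp: lat_int_edges_def lat_bdry_edges_def lat_bdry_def)
  finally show ?thesis .
qed

lemma sum_lat_int_edges_antisym:
  fixes a w :: "int list \<Rightarrow> real"
  shows "(\<Sum>(x, y)\<in>lat_int_edges \<Omega>. w x * (a y - a x))
     = - (1/2) * (\<Sum>(x, y)\<in>lat_int_edges \<Omega>. (a y - a x) * (w y - w x))"
proof -
  have "prod.swap ` lat_int_edges \<Omega> = lat_int_edges \<Omega>"
    using lat_adj_commute by (auto simp: lat_int_edges_def image_iff)
  then have swap: "(\<Sum>(x, y)\<in>lat_int_edges \<Omega>. w x * (a y - a x)) = (\<Sum>(x, y)\<in>lat_int_edges \<Omega>. w y * (a x - a y))"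
    using sum.reindex[of prod.swap "lat_int_edges \<Omega>" "\<lambda>(x, y). w x * (a y - a x)"]
    by (simp add: case_prod_unfold)
  have "2 * (\<Sum>(x, y)\<in>lat_int_edges \<Omega>. w x * (a y - a x))
      = (\<Sum>(x, y)\<in>lat_int_edges \<Omega>. w x * (a y - a x)) + (\<Sum>(x, y)\<in>lat_int_edges \<Omega>. w y * (a x - a y))"
    using swap by simp
  also have "\<dots> = (\<Sum>(x, y)\<in>lat_int_edges \<Omega>. w x * (a y - a x) + w y * (a x - a y))"
    by (simp add: sum.distrib case_prod_unfold)
  also have "\<dots> = - (\<Sum>(x, y)\<in>lat_int_edges \<Omega>. (a y - a x) * (w y - w x))"
    by (simp add: sum_negf[symmetric] case_prod_unfold algebra_simps)
  finally show ?thesis by simp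
qed

lemma green_lat_laplacian:
  assumes "finite \<Omega>" and "\<forall>y\<in>lat_bdry \<Omega>. w y = 0"
  shows "(\<Sum>x\<in>\<Omega>. w x * lat_laplacian a x) = - dirichlet_form \<Omega> a w"
proof -
  have "(\<Sum>(x, y)\<in>lat_bdry_edges \<Omega>. w x * (a y - a x))
      = - (\<Sum>(x, y)\<in>lat_bdry_edges \<Omega>. (a y - a x) * (w y - w x))"
    by (subst sum_negf[symmetric], rule sum.cong) (auto simp: lat_bdry_edges_def assms(2))
  then show ?thesis
    unfolding sum_mult_lat_laplacian_eq_edges[OF assms(1)] sum_lat_int_edges_antisym dirichlet_form_def
    by simp
qed

text \<open>With \<open>q t = (e\<^sup>t - 1)\<^sup>2 / 2\<close> as above, \<open>exp t * (exp t - 1) = q'(t)\<close>, so this says \<open>q'' \<le> 1\<close> on \<open>t \<le> 0\<close>.\<close>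

lemma exp_slope_minus_id_antitone:
  assumes "s \<le> t" "t \<le> (0::real)"
  shows "exp t * (exp t - 1) - t \<le> exp s * (exp s - 1) - s"
proof (rule DERIV_nonpos_imp_nonincreasing[OF \<open>s \<le> t\<close>])
  fix x assume "s \<le> x" "x \<le> t"
  then have "exp x \<le> 1" using assms by simp
  then have "(2 * exp x + 1) * (exp x - 1) \<le> 0"
    by (intro mult_nonneg_nonpos) auto
  moreover have "((\<lambda>x. exp x * (exp x - 1) - x) has_real_derivative (2 * exp x + 1) * (exp x - 1)) (at x)"
    by (auto intro!: derivative_eq_intros simp: algebra_simps)
  ultimately show "\<exists>y. ((\<lambda>x. exp x * (exp x - 1) - x) has_real_derivative y) (at x) \<and> y \<le> 0"
    by blast
qed

lemma exp_minus_one_sq_tangent_bound: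
  assumes "a \<le> 0" "b \<le> (0::real)"
  shows "(exp a - 1)\<^sup>2 / 2 - (exp b - 1)\<^sup>2 / 2 - exp b * (exp b - 1) * (a - b) \<le> (a - b)\<^sup>2 / 2"
proof -
  define h where "h x = (x - b)\<^sup>2 / 2 - ((exp x - 1)\<^sup>2 / 2 - exp b * (exp b - 1) * (x - b))" for x
  define h' where "h' x = (exp b * (exp b - 1) - b) - (exp x * (exp x - 1) - x)" for x
  have deriv: "(h has_real_derivative h' x) (at x)" for x
    unfolding h_def h'_def
    by (auto intro!: derivative_eq_intros simp: power2_eq_square field_simps)
  have "h b \<le> h a"
  proof (cases "a \<le> b")
    case True
    show ?thesis
    proof (rule DERIV_nonpos_imp_nonincreasing[OF True])
      fix x assume "a \<le> x" "x \<le> b"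
      then have "h' x \<le> 0"
        using exp_slope_minus_id_antitone[of x b] assms by (simp add: h'_def)
      with deriv show "\<exists>y. (h has_real_derivative y) (at x) \<and> y \<le> 0" by blast
    qed
  next
    case False
    show ?thesis
    proof (rule DERIV_nonneg_imp_nondecreasing[of b a h])
      fix x assume "b \<le> x" "x \<le> a"
      then have "h' x \<ge> 0"
        using exp_slope_minus_id_antitone[of b x] assms by (simp add: h'_def)
      with deriv show "\<exists>y. (h has_real_derivative y) (at x) \<and> y \<ge> 0" by blast
    qed (use False in simp)
  qed
  then show ?thesis by (simp add: h_def)
qed

lemma iteration_rhs_nonneg:
  assumes "b \<le> (0::real)" "0 \<le> lam" "lam \<le> K" "0 \<le> g"
  shows "0 \<le> lam * exp b * (exp b - 1) + g - K * b"
proof -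
  have "exp b * (exp b - 1) = (exp b - 1)\<^sup>2 + (exp b - 1)"
    by (simp add: power2_eq_square algebra_simps)
  then have "b \<le> exp b * (exp b - 1)"
    using exp_ge_add_one_self[of b] zero_le_power2[of "exp b - 1"] by linarith
  then have "lam * b \<le> lam * (exp b * (exp b - 1))"
    using assms(2) by (rule mult_left_mono)
  moreover have "K * b \<le> lam * b"
    using assms by (intro mult_right_mono_neg) auto
  ultimately show ?thesis using assms(4) by (simp add: algebra_simps)
qed

lemma energy_F_iteration_step_le:
  assumes "finite \<Omega>"
    and a_bdry: "\<forall>y\<in>lat_bdry \<Omega>. a y = 0" and b_bdry: "\<forall>y\<in>lat_bdry \<Omega>. b y = 0"
    and a_nonpos: "\<forall>x\<in>\<Omega>. a x \<le> 0" and b_nonpos: "\<forall>x\<in>\<Omega>. b x \<le> 0"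
    and "0 \<le> lam" "lam \<le> 2 * K"
    and eq: "\<forall>x\<in>\<Omega>. lat_laplacian a x - K * a x = lam * exp (b x) * (exp (b x) - 1) + g x - K * b x"
  shows "energy_F lam g \<Omega> a \<le> energy_F lam g \<Omega> b"
proof -
  define w where "w x = a x - b x" for x
  define r where "r x = lam / 2 * (exp (a x) - 1)\<^sup>2 - lam / 2 * (exp (b x) - 1)\<^sup>2
      - lam * exp (b x) * (exp (b x) - 1) * w x - K * (w x)\<^sup>2" for x
  have "\<forall>y\<in>lat_bdry \<Omega>. w y = 0" using a_bdry b_bdry by (simp add: w_def)
  then have green: "dirichlet_form \<Omega> a w = - (\<Sum>x\<in>\<Omega>. w x * lat_laplacian a x)"
    using green_lat_laplacian[OF \<open>finite \<Omega>\<close>] by simp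
  have lap: "w x * lat_laplacian a x = K * (w x)\<^sup>2 + w x * (lam * exp (b x) * (exp (b x) - 1) + g x)"
    if "x \<in> \<Omega>" for x
  proof -
    have "lat_laplacian a x = K * w x + (lam * exp (b x) * (exp (b x) - 1) + g x)"
      using eq that by (simp add: w_def algebra_simps)
    then show ?thesis by (simp add: power2_eq_square distrib_left)
  qed
  have "(\<lambda>x. a x - b x) = w" by (simp add: w_def fun_eq_iff)
  then have form_diff: "dirichlet_form \<Omega> a a - dirichlet_form \<Omega> b b
      = 2 * dirichlet_form \<Omega> a w - dirichlet_form \<Omega> w w"
    using dirichlet_form_self_diff[of \<Omega> a b] by simp
  have sum_diff: "(\<Sum>x\<in>\<Omega>. lam / 2 * (exp (a x) - 1)\<^sup>2 + g x * a x) - (\<Sum>x\<in>\<Omega>. lam / 2 * (exp (b x) - 1)\<^sup>2 + g x * b x)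
      = (\<Sum>x\<in>\<Omega>. lam / 2 * (exp (a x) - 1)\<^sup>2 - lam / 2 * (exp (b x) - 1)\<^sup>2 + g x * w x)"
    by (simp add: sum_subtractf[symmetric] w_def algebra_simps)
  have "energy_F lam g \<Omega> a - energy_F lam g \<Omega> b
      = dirichlet_form \<Omega> a w - dirichlet_form \<Omega> w w / 2
        + (\<Sum>x\<in>\<Omega>. lam / 2 * (exp (a x) - 1)\<^sup>2 - lam / 2 * (exp (b x) - 1)\<^sup>2 + g x * w x)"
    using form_diff sum_diff unfolding energy_F_def dirichlet_energy_eq_form by linarith
  also have "\<dots> = - dirichlet_form \<Omega> w w / 2 + (\<Sum>x\<in>\<Omega>. r x)"
    unfolding green sum_negf[symmetric] by (simp add: sum.distrib[symmetric] lap r_def algebra_simps cong: sum.cong)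
  also have "\<dots> \<le> 0"
  proof -
    have "r x \<le> 0" if "x \<in> \<Omega>" for x
    proof -
      have "lam * ((exp (a x) - 1)\<^sup>2 / 2 - (exp (b x) - 1)\<^sup>2 / 2 - exp (b x) * (exp (b x) - 1) * w x)
          \<le> lam * ((w x)\<^sup>2 / 2)"
        using exp_minus_one_sq_tangent_bound[of "a x" "b x"] a_nonpos b_nonpos that \<open>0 \<le> lam\<close>
        by (intro mult_left_mono) (auto simp: w_def)
      moreover have "lam / 2 * (w x)\<^sup>2 \<le> K * (w x)\<^sup>2"
        using \<open>lam \<le> 2 * K\<close> by (intro mult_right_mono) auto
      ultimately show ?thesis by (simp add: r_def algebra_simps)
    qed
    then have "(\<Sum>x\<in>\<Omega>. r x) \<le> 0" by (rule sum_nonpos)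
    with dirichlet_form_self_nonneg[of \<Omega> w] show ?thesis by simp
  qed
  finally show ?thesis by simp
qed

lemma energy_F_iterates_antitone:
  assumes "finite \<Omega>" "0 \<le> lam" "lam \<le> K" "0 < K" "\<forall>x. 0 \<le> g x"
    and u0: "\<forall>x. u 0 x = 0"
    and eq: "\<And>k. \<forall>x\<in>\<Omega>. lat_laplacian (u (Suc k)) x - K * u (Suc k) x
                  = lam * exp (u k x) * (exp (u k x) - 1) + g x - K * u k x"
    and bdry: "\<And>k. \<forall>x\<in>lat_bdry \<Omega>. u (Suc k) x = 0"
  shows "energy_F lam g \<Omega> (u (Suc k)) \<le> energy_F lam g \<Omega> (u k)"
proof -
  have bdry': "\<forall>x\<in>lat_bdry \<Omega>. u k x = 0" for k
    using u0 bdry by (cases k) auto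
  have nonpos: "\<forall>x\<in>\<Omega>. u k x \<le> 0" for k
  proof (induction k)
    case 0
    then show ?case using u0 by simp
  next
    case (Suc k)
    have "K * u (Suc k) x \<le> lat_laplacian (u (Suc k)) x" if "x \<in> \<Omega>" for x
    proof -
      have "0 \<le> lam * exp (u k x) * (exp (u k x) - 1) + g x - K * u k x"
        using Suc.IH that assms(2,3,5) by (intro iteration_rhs_nonneg) auto
      with eq[of k] that show ?thesis by auto
    qed
    then show ?case
      using lat_max_principle[OF \<open>finite \<Omega>\<close> bdry \<open>0 < K\<close>] by blast
  qed
  from assms(2,3) have "lam \<le> 2 * K" by linarith
  then show ?thesis
    by (rule energy_F_iteration_step_le[OF assms(1) bdry' bdry' nonpos nonpos assms(2) _ eq])
qed

theorem lemma3p5: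
  shows "\<exists>c0 :: nat \<Rightarrow> real \<Rightarrow> real \<Rightarrow> real.
    \<forall>(n::nat) (lam::real) (M::nat) (p::nat \<Rightarrow> int list) (nn::nat \<Rightarrow> nat)
      (\<Omega>0::int list set) (\<Omega>::int list set) (K::real) (u::nat \<Rightarrow> int list \<Rightarrow> real).
      n \<ge> 2 \<and> lam > 0
      \<and> (\<forall>j<M. length (p j) = n) \<and> inj_on p {..<M} \<and> (\<forall>j<M. nn j > 0)
      \<and> finite \<Omega>0 \<and> p ` {..<M} \<subseteq> \<Omega>0
      \<and> finite \<Omega> \<and> \<Omega> \<subseteq> {x. length x = n} \<and> lat_connected \<Omega> \<and> \<Omega>0 \<subseteq> \<Omega>
      \<and> K > 2 * lam
      \<and> (\<forall>x. u 0 x = 0)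
      \<and> (\<forall>k\<ge>1. (\<forall>x\<in>\<Omega>. lat_laplacian (u k) x - K * u k x
                  = lam * exp (u (k-1) x) * (exp (u (k-1) x) - 1) + vortex_src M p nn x
                    - K * u (k-1) x)
               \<and> (\<forall>x\<in>lat_bdry \<Omega>. u k x = 0))
      \<longrightarrow> (let g = vortex_src M p nn; C = 4 * pi * (\<Sum>j<M. real (nn j)) in
           energy_F lam g \<Omega> (u 1) \<le> c0 n C lam
           \<and> (\<forall>k\<ge>1. energy_F lam g \<Omega> (u (Suc k)) \<le> energy_F lam g \<Omega> (u k)))"
proof (intro exI[of _ "\<lambda>_ _ _. 0"] allI impI, unfold Let_def, elim conjE)
  fix lam K :: real and M :: nat and p nn and \<Omega> :: "int list set" and u :: "nat \<Rightarrow> int list \<Rightarrow> real"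
  assume "lam > 0" "K > 2 * lam" "finite \<Omega>" and u0: "\<forall>x. u 0 x = 0"
    and iter: "\<forall>k\<ge>1. (\<forall>x\<in>\<Omega>. lat_laplacian (u k) x - K * u k x
                  = lam * exp (u (k-1) x) * (exp (u (k-1) x) - 1) + vortex_src M p nn x
                    - K * u (k-1) x)
               \<and> (\<forall>x\<in>lat_bdry \<Omega>. u k x = 0)"
  have "\<forall>x. 0 \<le> vortex_src M p nn x"
    unfolding vortex_src_def by (intro allI mult_nonneg_nonneg sum_nonneg) auto
  then have antitone: "energy_F lam (vortex_src M p nn) \<Omega> (u (Suc k)) \<le> energy_F lam (vortex_src M p nn) \<Omega> (u k)" for k
    using \<open>lam > 0\<close> \<open>K > 2 * lam\<close> \<open>finite \<Omega>\<close> u0 iter[rule_format, of "Suc k" for k]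
    by (intro energy_F_iterates_antitone[where K = K]) auto
  have "energy_F lam (vortex_src M p nn) \<Omega> (u 0) = 0"
    using u0 by (simp add: energy_F_def dirichlet_energy_def)
  with antitone[of 0] antitone
  show "energy_F lam (vortex_src M p nn) \<Omega> (u 1) \<le> 0
    \<and> (\<forall>k\<ge>1. energy_F lam (vortex_src M p nn) \<Omega> (u (Suc k)) \<le> energy_F lam (vortex_src M p nn) \<Omega> (u k))"
    by simp
qed

end
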